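(* Let $T$ be large, let $P \le \sqrt{T}$ be large, and let $1/\log T < \epsilon < 1/10$. Then uniformly for all $\frac{1}{2} - \frac{1}{\log T} \le \sigma \le \frac{1}{2} + \frac{1}{\log T}$, $$ \int_{T}^{2T} \Big|\sum_{n \le \sqrt{t/2\pi}} \frac{1}{n^{\sigma + it}} - \sum_{\substack{m \le T^{\epsilon}, \\ m \text{ is } P\text{-smooth}}} \frac{1}{m^{1/2+it}} \sum_{\substack{n \le T^{1/2 - 2\epsilon}, \\ n \text{ is } P\text{-rough}}} \frac{1}{n^{\sigma+it}} \Big|^2 dt \ll T \log T \big( e^{-\epsilon (\log T)/\log P} + \epsilon \big) . $$
   Context: A positive integer is $P$-smooth if all its prime factors are $\le P$, and $P$-rough if all its prime factors are $> P$ (so $1$ is both). *)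

theory Defs
  imports "HOL-Analysis.Analysis" "HOL-Computational_Algebra.Primes"
begin

definition smooth :: "real \<Rightarrow> nat \<Rightarrow> bool" where
  "smooth P n \<longleftrightarrow> n > 0 \<and> (\<forall>p\<in>prime_factors n. real p \<le> P)"

definition rough :: "real \<Rightarrow> nat \<Rightarrow> bool" where
  "rough P n \<longleftrightarrow> n > 0 \<and> (\<forall>p\<in>prime_factors n. real p > P)"

end

theory Submission
  imports Defs "HOL-Analysis.Harmonic_Numbers"
begin

text \<open>
  Put K = floor (sqrt (T / pi)). For t in [T, 2T] the integrand is
  |sum_{k <= K} beta_k(t) k^(-it)|^2, where beta_k(t) = [2 pi k^2 <= t] k^(-sigma) - c_k
  (\<open>jump k t\<close> below) and c_k = m^(-1/2) n^(-sigma) if k = mn with m <= T^eps P-smooth and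
  n <= T^(1/2 - 2 eps) P-rough, such a factorisation being unique, and c_k = 0 otherwise.
  Each beta_k is a step function with a single jump, so expanding the square and integrating
  term by term gives T sum_k max |beta_k|^2 + O(K^2), and K^2 << T <= eps T log T.

  If k = mn as above, then |beta_k| <= n^(-sigma) |m^(-sigma) - m^(-1/2)| << eps k^(-1/2),
  because |sigma - 1/2| log m <= eps. Otherwise beta_k^2 << 1/k, and either
  k > T^(1/2 - 2 eps), and these k contribute O(eps log T), or the P-smooth part s(k) of k
  exceeds T^eps. By Rankin's trick with delta = 1/log P the latter contribute at most
  T^(-eps delta) sum_{k <= K} s(k)^delta / k
    <= exp (- eps log T / log P) prod_{p <= P} (1 + (p^delta - 1) / (p - p^delta)) log T,
  and the product is exp (O (sum_{p <= P} log p / (p log P))) = O(1) by Chebyshev's bound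
  sum_{p <= x} log p / p <= 2 log x.
\<close>

subsection \<open>A mean value theorem for Dirichlet polynomials with jumping coefficients\<close>

definition jump_coeff :: "real \<Rightarrow> real \<Rightarrow> real \<Rightarrow> real \<Rightarrow> real" where
  "jump_coeff x y a t = x + (if a \<le> t then y else 0)"

lemma abs_integral_cos_mult_le:
  fixes c d w :: real
  assumes "w \<noteq> 0"
  shows "\<bar>integral {c..d} (\<lambda>t. cos (w * t))\<bar> \<le> 2 / \<bar>w\<bar>"
proof (cases "c \<le> d")
  case True
  have "((\<lambda>t. cos (w * t)) has_integral ((\<lambda>t. sin (w * t) / w) d - (\<lambda>t. sin (w * t) / w) c)) {c..d}"
    by (rule fundamental_theorem_of_calculus[OF True])
      (use assms in \<open>auto intro!: derivative_eq_intros
        simp: has_real_derivative_iff_has_vector_derivative[symmetric]\<close>)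
  then have "integral {c..d} (\<lambda>t. cos (w * t)) = (sin (w * d) - sin (w * c)) / w"
    by (simp add: integral_unique diff_divide_distrib)
  moreover have "\<bar>sin (w * d) - sin (w * c)\<bar> \<le> 2"
    using abs_sin_le_one[of "w * d"] abs_sin_le_one[of "w * c"] by linarith
  ultimately show ?thesis
    by (simp add: abs_divide divide_right_mono)
qed simp

lemma cos_mult_from_integrable:
  fixes a c d w :: real
  shows "(\<lambda>t. if a \<le> t then cos (w * t) else 0) integrable_on {c..d}"
proof -
  have eq: "{a..} \<inter> {c..d} = {max a c..d}" by auto
  have "(\<lambda>t. if t \<in> {a..} then cos (w * t) else 0) integrable_on {c..d}"
    unfolding integrable_restrict_Int eq by (intro integrable_continuous_interval continuous_intros)
  then show ?thesis by simp
qed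

lemma abs_integral_cos_mult_from_le:
  fixes a c d w :: real
  assumes "w \<noteq> 0"
  shows "\<bar>integral {c..d} (\<lambda>t. if a \<le> t then cos (w * t) else 0)\<bar> \<le> 2 / \<bar>w\<bar>"
proof -
  have "{a..} \<inter> {c..d} = {max a c..d}" by auto
  then have "integral {c..d} (\<lambda>t. if t \<in> {a..} then cos (w * t) else 0)
      = integral {max a c..d} (\<lambda>t. cos (w * t))"
    by (simp only: integral_restrict_Int)
  then show ?thesis
    using abs_integral_cos_mult_le[OF assms, of "max a c" d] by simp
qed

lemma jump_coeff_product_cos:
  fixes x1 y1 a1 x2 y2 a2 w c d :: real
  defines "h \<equiv> \<lambda>t. jump_coeff x1 y1 a1 t * jump_coeff x2 y2 a2 t * cos (w * t)"
  shows jump_coeff_product_cos_integrable: "h integrable_on {c..d}"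
    and abs_integral_jump_coeff_product_cos_le:
      "w \<noteq> 0 \<Longrightarrow> \<bar>integral {c..d} h\<bar> \<le> 2 * (\<bar>x1\<bar> + \<bar>y1\<bar>) * (\<bar>x2\<bar> + \<bar>y2\<bar>) / \<bar>w\<bar>"
proof -
  define f where "f = (\<lambda>a t. if a \<le> t then cos (w * t) else (0::real))"
  have h_eq: "h = (\<lambda>t. x1 * x2 * cos (w * t) + x1 * y2 * f a2 t + y1 * x2 * f a1 t
                      + y1 * y2 * f (max a1 a2) t)"
    by (auto simp: h_def f_def jump_coeff_def fun_eq_iff algebra_simps)
  have f_int: "f a integrable_on {c..d}" for a
    unfolding f_def by (rule cos_mult_from_integrable)
  have cos_int: "(\<lambda>t. cos (w * t)) integrable_on {c..d}"
    by (intro integrable_continuous_interval continuous_intros)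
  have int1: "(\<lambda>t. C * cos (w * t)) integrable_on {c..d}" for C
    using integrable_on_cmult_left[OF cos_int] by simp
  have int2: "(\<lambda>t. C * f a t) integrable_on {c..d}" for C a
    using integrable_on_cmult_left[OF f_int] by simp
  show "h integrable_on {c..d}"
    unfolding h_eq by (intro integrable_add int1 int2)
  assume w: "w \<noteq> 0"
  have f_le: "\<bar>integral {c..d} (f a)\<bar> \<le> 2 / \<bar>w\<bar>" for a
    unfolding f_def by (rule abs_integral_cos_mult_from_le[OF w])
  have scaled: "\<bar>C * z\<bar> \<le> \<bar>C\<bar> * (2 / \<bar>w\<bar>)" if "\<bar>z\<bar> \<le> 2 / \<bar>w\<bar>" for C z :: real
    using mult_left_mono[OF that, of "\<bar>C\<bar>"] by (simp add: abs_mult)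
  have "integral {c..d} h = x1 * x2 * integral {c..d} (\<lambda>t. cos (w * t)) + x1 * y2 * integral {c..d} (f a2)
      + y1 * x2 * integral {c..d} (f a1) + y1 * y2 * integral {c..d} (f (max a1 a2))"
    unfolding h_eq by (simp add: integral_add integrable_add int1 int2 cos_int f_int)
  also have "\<bar>\<dots>\<bar> \<le> \<bar>x1 * x2\<bar> * (2 / \<bar>w\<bar>) + \<bar>x1 * y2\<bar> * (2 / \<bar>w\<bar>) + \<bar>y1 * x2\<bar> * (2 / \<bar>w\<bar>)
      + \<bar>y1 * y2\<bar> * (2 / \<bar>w\<bar>)"
    by (intro order.trans[OF abs_triangle_ineq] add_mono scaled f_le abs_integral_cos_mult_le w)
  also have "\<dots> = 2 * (\<bar>x1\<bar> + \<bar>y1\<bar>) * (\<bar>x2\<bar> + \<bar>y2\<bar>) / \<bar>w\<bar>"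
    by (simp add: abs_mult add_divide_distrib algebra_simps)
  finally show "\<bar>integral {c..d} h\<bar> \<le> 2 * (\<bar>x1\<bar> + \<bar>y1\<bar>) * (\<bar>x2\<bar> + \<bar>y2\<bar>) / \<bar>w\<bar>" .
qed

lemma norm_sum_of_real_cis_squared:
  fixes b \<theta> :: "'a \<Rightarrow> real"
  shows "(cmod (\<Sum>k\<in>I. complex_of_real (b k) * cis (\<theta> k)))\<^sup>2
    = (\<Sum>j\<in>I. \<Sum>k\<in>I. b j * b k * cos (\<theta> j - \<theta> k))"
proof -
  define z where "z = (\<Sum>k\<in>I. complex_of_real (b k) * cis (\<theta> k))"
  have "(cmod z)\<^sup>2 = Re (z * cnj z)"
    by (metis Re_complex_of_real complex_norm_square)
  also have "z * cnj z = (\<Sum>j\<in>I. \<Sum>k\<in>I. (complex_of_real (b j) * cis (\<theta> j)) * cnj (complex_of_real (b k) * cis (\<theta> k)))"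
    unfolding z_def cnj_sum by (rule sum_product)
  also have "\<dots> = (\<Sum>j\<in>I. \<Sum>k\<in>I. complex_of_real (b j * b k) * cis (\<theta> j - \<theta> k))"
    by (intro sum.cong refl) (simp add: cis_cnj cis_mult algebra_simps)
  finally show ?thesis
    by (simp add: z_def Re_sum)
qed

lemma mean_value_jump_dirichlet:
  fixes I :: "nat set" and x y a S :: "nat \<Rightarrow> real" and c d :: real
  assumes fin: "finite I" and cd: "c \<le> d" and pos: "\<And>k. k \<in> I \<Longrightarrow> 0 < k"
    and sq_le: "\<And>k t. k \<in> I \<Longrightarrow> t \<in> {c..d} \<Longrightarrow> (jump_coeff (x k) (y k) (a k) t)\<^sup>2 \<le> S k"
  shows "integral {c..d} (\<lambda>t. (cmod (\<Sum>k\<in>I. complex_of_real (jump_coeff (x k) (y k) (a k) t)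
                                             * cis (- (t * ln (real k)))))\<^sup>2)
    \<le> (d - c) * (\<Sum>k\<in>I. S k) + (\<Sum>j\<in>I. \<Sum>k\<in>I. if j = k then 0 else
         2 * (\<bar>x j\<bar> + \<bar>y j\<bar>) * (\<bar>x k\<bar> + \<bar>y k\<bar>) / \<bar>ln (real k) - ln (real j)\<bar>)"
proof -
  define \<beta> where "\<beta> = (\<lambda>k t. jump_coeff (x k) (y k) (a k) t)"
  define h where "h = (\<lambda>j k t. \<beta> j t * \<beta> k t * cos ((ln (real k) - ln (real j)) * t))"
  define B where "B = (\<lambda>j k. 2 * (\<bar>x j\<bar> + \<bar>y j\<bar>) * (\<bar>x k\<bar> + \<bar>y k\<bar>) / \<bar>ln (real k) - ln (real j)\<bar>)"
  have square: "(cmod (\<Sum>k\<in>I. complex_of_real (\<beta> k t) * cis (- (t * ln (real k)))))\<^sup>2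
      = (\<Sum>j\<in>I. \<Sum>k\<in>I. h j k t)" for t
    unfolding norm_sum_of_real_cis_squared h_def by (simp add: algebra_simps)
  have h_int: "h j k integrable_on {c..d}" for j k
    unfolding h_def \<beta>_def by (rule jump_coeff_product_cos_integrable)
  have term_le: "integral {c..d} (h j k) \<le> (if j = k then (d - c) * S j else 0) + (if j = k then 0 else B j k)"
    if jk: "j \<in> I" "k \<in> I" for j k
  proof (cases "j = k")
    case True
    have "integral {c..d} (h j k) \<le> integral {c..d} (\<lambda>_. S j)"
      using sq_le[OF jk(1)] True
      by (intro integral_le[OF h_int integrable_const_ivl]) (simp add: h_def \<beta>_def power2_eq_square)
    then show ?thesis using True cd by simp
  next
    case False
    then have "ln (real k) - ln (real j) \<noteq> 0" using pos jk by simp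
    then have "\<bar>integral {c..d} (h j k)\<bar> \<le> B j k"
      unfolding h_def \<beta>_def B_def by (rule abs_integral_jump_coeff_product_cos_le)
    then show ?thesis using False by simp
  qed
  have "integral {c..d} (\<lambda>t. (cmod (\<Sum>k\<in>I. complex_of_real (\<beta> k t) * cis (- (t * ln (real k)))))\<^sup>2)
      = (\<Sum>j\<in>I. \<Sum>k\<in>I. integral {c..d} (h j k))"
    unfolding square by (simp add: integral_sum fin h_int integrable_sum)
  also have "\<dots> \<le> (\<Sum>j\<in>I. \<Sum>k\<in>I. (if j = k then (d - c) * S j else 0) + (if j = k then 0 else B j k))"
    using term_le by (intro sum_mono) auto
  also have "\<dots> = (d - c) * (\<Sum>k\<in>I. S k) + (\<Sum>j\<in>I. \<Sum>k\<in>I. if j = k then 0 else B j k)"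
    by (simp add: sum.distrib fin sum_distrib_left)
  finally show ?thesis unfolding \<beta>_def B_def .
qed

lemma inverse_le_ln_diff:
  fixes j k :: nat
  assumes "0 < j" "j < k"
  shows "1 / real k \<le> ln (real k) - ln (real j)"
proof -
  have "ln (real j / real k) \<le> real j / real k - 1"
    using assms by (intro ln_le_minus_one) auto
  moreover have "real j / real k - 1 = (real j - real k) / real k"
    using assms by (simp add: field_simps)
  moreover have "(real j - real k) / real k \<le> - 1 / real k"
    using assms by (intro divide_right_mono) auto
  ultimately show ?thesis using assms by (simp add: ln_div)
qed

lemma off_diagonal_term_le:
  fixes j k :: nat and wj wk :: real
  assumes "0 < j" "0 < k" "j \<noteq> k" "0 \<le> wj" "wj \<le> 4 / sqrt j" "0 \<le> wk" "wk \<le> 4 / sqrt k"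
  shows "2 * wj * wk / \<bar>ln (real k) - ln (real j)\<bar> \<le> 32 * (sqrt j / sqrt k + sqrt k / sqrt j)"
proof -
  define m where "m = max j k"
  have gap: "1 / real m \<le> \<bar>ln (real k) - ln (real j)\<bar>"
    using inverse_le_ln_diff[of j k] inverse_le_ln_diff[of k j] assms
    by (cases "j < k") (auto simp: m_def)
  have m_pos: "real m > 0" using assms by (simp add: m_def)
  have gap_pos: "\<bar>ln (real k) - ln (real j)\<bar> > 0"
    using gap m_pos by (smt (verit) divide_pos_pos)
  have "2 * wj * wk / \<bar>ln (real k) - ln (real j)\<bar> \<le> 2 * wj * wk * real m"
  proof -
    have "1 / \<bar>ln (real k) - ln (real j)\<bar> \<le> real m"
      using gap m_pos gap_pos by (simp add: field_simps)
    then show ?thesis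
      using mult_left_mono[of _ _ "2 * wj * wk"] assms by (simp add: divide_inverse)
  qed
  also have "\<dots> \<le> 2 * (4 / sqrt j) * (4 / sqrt k) * real m"
    using assms m_pos by (intro mult_right_mono mult_mono) auto
  also have "\<dots> = 32 * (real m / (sqrt j * sqrt k))" by simp
  also have "real m / (sqrt j * sqrt k) \<le> sqrt j / sqrt k + sqrt k / sqrt j"
  proof -
    have "real m \<le> sqrt j * sqrt j + sqrt k * sqrt k" by (simp add: m_def)
    then show ?thesis using assms by (simp add: field_simps)
  qed
  finally show ?thesis by simp
qed

lemma sum_inverse_sqrt_le: "(\<Sum>j\<in>{1..K}. 1 / sqrt (real j)) \<le> 2 * sqrt (real K)"
proof (induction K)
  case (Suc K)
  have mono: "sqrt (real K) \<le> sqrt (real (Suc K))" by simp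
  have "(sqrt (real (Suc K)) - sqrt (real K)) * (sqrt (real (Suc K)) + sqrt (real K)) = 1"
    by (simp add: algebra_simps)
  moreover have "(sqrt (real (Suc K)) - sqrt (real K)) * (sqrt (real (Suc K)) + sqrt (real K))
      \<le> (sqrt (real (Suc K)) - sqrt (real K)) * (2 * sqrt (real (Suc K)))"
    using mono by (intro mult_left_mono) auto
  ultimately have "1 \<le> (sqrt (real (Suc K)) - sqrt (real K)) * (2 * sqrt (real (Suc K)))"
    by linarith
  then have "1 / sqrt (real (Suc K)) \<le> 2 * (sqrt (real (Suc K)) - sqrt (real K))"
    by (simp add: field_simps)
  then show ?case using Suc by (simp add: algebra_simps)
qed simp

lemma off_diagonal_sum_le:
  fixes w :: "nat \<Rightarrow> real" and K :: nat
  assumes w: "\<And>k. k \<in> {1..K} \<Longrightarrow> 0 \<le> w k \<and> w k \<le> 4 / sqrt k"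
  shows "(\<Sum>j\<in>{1..K}. \<Sum>k\<in>{1..K}. if j = k then 0 else 2 * w j * w k / \<bar>ln (real k) - ln (real j)\<bar>)
    \<le> 128 * (real K)\<^sup>2"
proof -
  define u where "u = (\<lambda>j::nat. sqrt (real j))"
  define v where "v = (\<lambda>j::nat. 1 / sqrt (real j))"
  have "(\<Sum>j\<in>{1..K}. \<Sum>k\<in>{1..K}. if j = k then 0 else 2 * w j * w k / \<bar>ln (real k) - ln (real j)\<bar>)
      \<le> (\<Sum>j\<in>{1..K}. \<Sum>k\<in>{1..K}. 32 * (u j * v k + u k * v j))"
    using off_diagonal_term_le w by (intro sum_mono) (auto simp: u_def v_def)
  also have "\<dots> = 32 * (\<Sum>j\<in>{1..K}. \<Sum>k\<in>{1..K}. u j * v k) + 32 * (\<Sum>j\<in>{1..K}. \<Sum>k\<in>{1..K}. u k * v j)"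
    by (simp add: sum.distrib sum_distrib_left distrib_left)
  also have "(\<Sum>j\<in>{1..K}. \<Sum>k\<in>{1..K}. u k * v j) = (\<Sum>j\<in>{1..K}. \<Sum>k\<in>{1..K}. u j * v k)"
    by (rule sum.swap)
  also have "(\<Sum>j\<in>{1..K}. \<Sum>k\<in>{1..K}. u j * v k) = (\<Sum>j\<in>{1..K}. u j) * (\<Sum>k\<in>{1..K}. v k)"
    by (rule sum_product[symmetric])
  also have "(\<Sum>j\<in>{1..K}. u j) \<le> real K * sqrt (real K)"
    using sum_bounded_above[of "{1..K}" u "sqrt (real K)"] by (simp add: u_def)
  also have "(\<Sum>k\<in>{1..K}. v k) \<le> 2 * sqrt (real K)"
    unfolding v_def by (rule sum_inverse_sqrt_le)
  finally show ?thesis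
    by (simp add: power2_eq_square u_def v_def sum_nonneg mult_left_mono mult_right_mono)
qed

lemma mean_value_jump_dirichlet_le:
  fixes x y a S :: "nat \<Rightarrow> real" and c d :: real and K :: nat
  assumes "c \<le> d" and coeff_le: "\<And>k. k \<in> {1..K} \<Longrightarrow> \<bar>x k\<bar> + \<bar>y k\<bar> \<le> 4 / sqrt k"
    and "\<And>k t. k \<in> {1..K} \<Longrightarrow> t \<in> {c..d} \<Longrightarrow> (jump_coeff (x k) (y k) (a k) t)\<^sup>2 \<le> S k"
  shows "integral {c..d} (\<lambda>t. (cmod (\<Sum>k\<in>{1..K}. complex_of_real (jump_coeff (x k) (y k) (a k) t)
                                                  * cis (- (t * ln (real k)))))\<^sup>2)
    \<le> (d - c) * (\<Sum>k\<in>{1..K}. S k) + 128 * (real K)\<^sup>2"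
proof -
  have "(\<Sum>j\<in>{1..K}. \<Sum>k\<in>{1..K}. if j = k then 0 else
           2 * (\<bar>x j\<bar> + \<bar>y j\<bar>) * (\<bar>x k\<bar> + \<bar>y k\<bar>) / \<bar>ln (real k) - ln (real j)\<bar>) \<le> 128 * (real K)\<^sup>2"
    using coeff_le by (intro off_diagonal_sum_le) auto
  moreover have "integral {c..d} (\<lambda>t. (cmod (\<Sum>k\<in>{1..K}. complex_of_real (jump_coeff (x k) (y k) (a k) t)
                                                  * cis (- (t * ln (real k)))))\<^sup>2)
    \<le> (d - c) * (\<Sum>k\<in>{1..K}. S k) + (\<Sum>j\<in>{1..K}. \<Sum>k\<in>{1..K}. if j = k then 0 else
           2 * (\<bar>x j\<bar> + \<bar>y j\<bar>) * (\<bar>x k\<bar> + \<bar>y k\<bar>) / \<bar>ln (real k) - ln (real j)\<bar>)"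
    using assms(1,3) by (intro mean_value_jump_dirichlet) auto
  ultimately show ?thesis by linarith
qed

subsection \<open>Chebyshev's bound for \<open>\<Sum> log p / p\<close>\<close>

lemma sum_ln_prime_factors_le:
  fixes k :: nat
  assumes "k > 0"
  shows "(\<Sum>p\<in>prime_factors k. ln (real p)) \<le> ln (real k)"
proof -
  have "(\<Prod>p\<in>prime_factors k. p) \<le> (\<Prod>p\<in>prime_factors k. p ^ multiplicity p k)"
  proof (intro prod_mono conjI)
    fix p assume p: "p \<in> prime_factors k"
    then have "multiplicity p k > 0" "p > 0"
      by (auto simp: prime_factors_multiplicity intro: prime_gt_0_nat)
    then show "p \<le> p ^ multiplicity p k"
      by (metis One_nat_def Suc_leI self_le_power)
  qed simp
  also have "\<dots> = k" using prime_factorization_nat[OF assms] by simp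
  finally have le: "real (\<Prod>p\<in>prime_factors k. p) \<le> real k" by (simp only: of_nat_le_iff)
  have pos: "0 < real (\<Prod>p\<in>prime_factors k. p)"
    by (simp only: of_nat_0_less_iff, rule prod_pos) (meson in_prime_factors_imp_prime prime_gt_0_nat)
  have "(\<Sum>p\<in>prime_factors k. ln (real p)) = ln (real (\<Prod>p\<in>prime_factors k. p))"
    by (subst ln_prod[symmetric]) (auto dest: in_prime_factors_imp_prime simp: prime_gt_0_nat)
  also have "\<dots> \<le> ln (real k)"
    using pos le by simp
  finally show ?thesis .
qed

lemma multiples_atLeastAtMost_eq:
  fixes d n :: nat
  assumes "d > 0"
  shows "{k\<in>{1..n}. d dvd k} = (\<lambda>j. d * j) ` {1..n div d}"
proof (intro equalityI subsetI)
  fix k assume "k \<in> (\<lambda>j. d * j) ` {1..n div d}"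
  then obtain j where j: "j \<in> {1..n div d}" "k = d * j" by auto
  have "d * j \<le> d * (n div d)" using j by simp
  also have "\<dots> \<le> n" by simp
  finally show "k \<in> {k\<in>{1..n}. d dvd k}" using j assms by auto
next
  fix k assume k: "k \<in> {k\<in>{1..n}. d dvd k}"
  then obtain j where j: "k = d * j" by auto
  have "j \<ge> 1" using k j by (cases j) auto
  moreover have "j \<le> n div d"
    using k j assms by (metis atLeastAtMost_iff div_le_mono mem_Collect_eq nonzero_mult_div_cancel_left not_gr0)
  ultimately show "k \<in> (\<lambda>j. d * j) ` {1..n div d}" using j by auto
qed

lemma card_multiples_atLeastAtMost:
  fixes d n :: nat
  assumes "d > 0"
  shows "card {k\<in>{1..n}. d dvd k} = n div d"
  unfolding multiples_atLeastAtMost_eq[OF assms] using assms by (subst card_image) (auto simp: inj_on_def)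

lemma sum_multiples_atLeastAtMost:
  fixes d n :: nat and F :: "nat \<Rightarrow> real"
  assumes "d > 0"
  shows "(\<Sum>k\<in>{k\<in>{1..n}. d dvd k}. F k / real k) = (\<Sum>j\<in>{1..n div d}. F (d * j) / real j) / real d"
proof -
  have "(\<Sum>k\<in>{k\<in>{1..n}. d dvd k}. F k / real k) = (\<Sum>j\<in>{1..n div d}. F (d * j) / real (d * j))"
    unfolding multiples_atLeastAtMost_eq[OF assms] using assms by (subst sum.reindex) (auto simp: inj_on_def)
  then show ?thesis
    by (simp add: sum_divide_distrib field_simps)
qed

lemma sum_ln_prime_mult_div_le:
  fixes n :: nat
  shows "(\<Sum>p | prime p \<and> p \<le> n. ln (real p) * real (n div p)) \<le> real n * ln (real n)"
proof -
  define Pn where "Pn = {p. prime p \<and> p \<le> n}"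
  have fin: "finite Pn" unfolding Pn_def by (rule finite_subset[of _ "{..n}"]) auto
  have "(\<Sum>p\<in>Pn. ln (real p) * real (n div p)) = (\<Sum>p\<in>Pn. \<Sum>k\<in>{1..n}. if p dvd k then ln (real p) else 0)"
  proof (intro sum.cong refl)
    fix p assume "p \<in> Pn"
    then have "p > 0" by (simp add: Pn_def prime_gt_0_nat)
    have "(\<Sum>k\<in>{1..n}. if p dvd k then ln (real p) else 0) = (\<Sum>k\<in>{k\<in>{1..n}. p dvd k}. ln (real p))"
      by (rule sum.inter_filter[symmetric]) simp
    then show "ln (real p) * real (n div p) = (\<Sum>k\<in>{1..n}. if p dvd k then ln (real p) else 0)"
      using card_multiples_atLeastAtMost[OF \<open>p > 0\<close>, of n] by simp
  qed
  also have "\<dots> = (\<Sum>k\<in>{1..n}. \<Sum>p\<in>Pn. if p dvd k then ln (real p) else 0)"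
    by (rule sum.swap)
  also have "\<dots> = (\<Sum>k\<in>{1..n}. \<Sum>p\<in>prime_factors k. ln (real p))"
  proof (rule sum.cong[OF refl])
    fix k assume k: "k \<in> {1..n}"
    then have "prime_factors k = {p\<in>Pn. p dvd k}"
      unfolding Pn_def by (auto simp: prime_factors_dvd dest: dvd_imp_le)
    then show "(\<Sum>p\<in>Pn. if p dvd k then ln (real p) else 0) = (\<Sum>p\<in>prime_factors k. ln (real p))"
      using fin by (simp add: sum.inter_filter)
  qed
  also have "\<dots> \<le> (\<Sum>k\<in>{1..n}. ln (real n))"
    by (intro sum_mono order.trans[OF sum_ln_prime_factors_le]) auto
  finally show ?thesis by (simp add: Pn_def)
qed

lemma sum_ln_prime_div_prime_le:
  fixes x :: real
  assumes x: "x \<ge> 1"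
  shows "(\<Sum>p | prime p \<and> real p \<le> x. ln (real p) / real p) \<le> 2 * ln x"
proof -
  define n where "n = nat \<lfloor>x\<rfloor>"
  have n: "n \<ge> 1" "real n \<le> x" unfolding n_def using x by linarith+
  have primes_eq: "{p. prime p \<and> real p \<le> x} = {p. prime p \<and> p \<le> n}"
    unfolding n_def using x by (auto simp: le_nat_iff le_floor_iff)
  have "(\<Sum>p | prime p \<and> p \<le> n. ln (real p) * (real n / (2 * real p)))
      \<le> (\<Sum>p | prime p \<and> p \<le> n. ln (real p) * real (n div p))"
  proof (intro sum_mono mult_left_mono)
    fix p assume "p \<in> {p. prime p \<and> p \<le> n}"
    then have p: "p \<ge> 2" "p \<le> n" by (auto simp: prime_ge_2_nat)
    have "real n = real (n div p) * real p + real (n mod p)"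
      by (metis of_nat_add of_nat_mult div_mult_mod_eq)
    moreover have "real (n mod p) < real p" using p by simp
    ultimately have "real n < real p * real (n div p) + real p" by (simp add: algebra_simps)
    moreover have "n div p \<ge> 1" using p by (simp add: Suc_le_eq div_greater_zero_iff)
    then have "real p * 1 \<le> real p * real (n div p)" by (intro mult_left_mono) auto
    ultimately have "real n \<le> 2 * (real p * real (n div p))" by linarith
    then show "real n / (2 * real p) \<le> real (n div p)"
      using p by (simp add: field_simps)
    show "0 \<le> ln (real p)" using p by simp
  qed
  also have "\<dots> \<le> real n * ln (real n)"
    by (rule sum_ln_prime_mult_div_le)
  finally have "(real n / 2) * (\<Sum>p | prime p \<and> p \<le> n. ln (real p) / real p) \<le> (real n / 2) * (2 * ln (real n))"
    by (simp add: sum_distrib_left field_simps)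
  then have "(\<Sum>p | prime p \<and> p \<le> n. ln (real p) / real p) \<le> 2 * ln (real n)"
    using n by (simp add: mult_le_cancel_left_pos)
  also have "\<dots> \<le> 2 * ln x" using n by simp
  finally show ?thesis unfolding primes_eq .
qed

subsection \<open>Rankin's trick\<close>

definition smooth_part :: "nat set \<Rightarrow> nat \<Rightarrow> nat" where
  "smooth_part Q k = (\<Prod>p\<in>Q. p ^ multiplicity p k)"

definition rankin_factor :: "real \<Rightarrow> nat \<Rightarrow> real" where
  "rankin_factor \<delta> p = (real p powr \<delta> - 1) / (real p - real p powr \<delta>)"

lemma smooth_part_insert:
  "finite Q \<Longrightarrow> q \<notin> Q \<Longrightarrow> smooth_part (insert q Q) k = q ^ multiplicity q k * smooth_part Q k"
  by (simp add: smooth_part_def)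

lemma smooth_part_pos: "\<forall>p\<in>Q. prime p \<Longrightarrow> smooth_part Q k > 0"
  unfolding smooth_part_def by (rule prod_pos) (auto simp: prime_gt_0_nat)

lemma smooth_part_prime_power_mult:
  assumes "\<forall>p\<in>Q. prime p" "prime q" "q \<notin> Q" "j > 0"
  shows "smooth_part Q (q ^ b * j) = smooth_part Q j"
  unfolding smooth_part_def
proof (rule prod.cong[OF refl])
  fix p assume p: "p \<in> Q"
  then have "prime p" "p \<noteq> q" using assms by auto
  then have "multiplicity p (q ^ b * j) = multiplicity p (q ^ b) + multiplicity p j"
    using assms by (intro prime_elem_multiplicity_mult_distrib) (auto simp: prime_gt_0_nat)
  also have "multiplicity p (q ^ b) = 0"
    using \<open>prime p\<close> \<open>p \<noteq> q\<close> assms by (intro multiplicity_distinct_prime_power) auto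
  finally show "p ^ multiplicity p (q ^ b * j) = p ^ multiplicity p j" by simp
qed

lemma sum_power_diff_div_power_le:
  fixes r q :: real and n :: nat
  assumes "1 \<le> r" "r < q"
  shows "(\<Sum>b\<in>{1..n}. (r ^ b - r ^ (b - 1)) / q ^ b) \<le> (r - 1) / (q - r)"
proof -
  have q: "q > 0" "r / q < 1" "0 \<le> r / q" using assms by auto
  have "(\<Sum>b\<in>{1..n}. (r ^ b - r ^ (b - 1)) / q ^ b) = (\<Sum>i<n. (r ^ Suc i - r ^ i) / q ^ Suc i)"
    by (rule sum.reindex_bij_witness[where i = Suc and j = "\<lambda>b. b - 1"]) auto
  also have "\<dots> = ((r - 1) / q) * (\<Sum>i<n. (r / q) ^ i)"
    using q by (simp add: sum_distrib_left power_divide field_simps)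
  also have "\<dots> \<le> ((r - 1) / q) * (1 / (1 - r / q))"
  proof (intro mult_left_mono)
    have "(\<Sum>i<n. (r / q) ^ i) = (1 - (r / q) ^ n) / (1 - r / q)"
      using q by (subst sum_gp_strict) auto
    also have "\<dots> \<le> 1 / (1 - r / q)"
      using q by (intro divide_right_mono) auto
    finally show "(\<Sum>i<n. (r / q) ^ i) \<le> 1 / (1 - r / q)" .
  qed (use assms q in auto)
  also have "\<dots> = (r - 1) / (q - r)"
    using assms q by (simp add: field_simps)
  finally show ?thesis .
qed

lemma rankin_factor_bounds:
  assumes "prime p" "0 \<le> \<delta>" "\<delta> < 1"
  shows "1 \<le> real p powr \<delta>" "real p powr \<delta> < real p" "0 \<le> rankin_factor \<delta> p"
proof -
  have p: "real p \<ge> 2" using prime_ge_2_nat[OF assms(1)] by linarith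
  show "1 \<le> real p powr \<delta>" using p assms by (intro ge_one_powr_ge_zero) auto
  moreover show "real p powr \<delta> < real p" using p assms powr_less_mono[of \<delta> 1 "real p"] by simp
  ultimately show "0 \<le> rankin_factor \<delta> p" by (simp add: rankin_factor_def)
qed

text \<open>Telescoping q^(delta v) = 1 + sum_{1 <= b <= v} (q^(delta b) - q^(delta (b - 1))), with v the
  multiplicity of q in k, turns the new factor into a sum over the prime powers q^b dividing k.\<close>

lemma smooth_part_insert_powr_eq:
  fixes q n k :: nat and \<delta> :: real
  defines "r \<equiv> real q powr \<delta>"
  assumes "finite Q" "q \<notin> Q" "prime q" "k \<in> {1..n}"
  shows "real (smooth_part (insert q Q) k) powr \<delta>
    = (1 + (\<Sum>b\<in>{1..n}. if q ^ b dvd k then r ^ b - r ^ (b - 1) else 0)) * real (smooth_part Q k) powr \<delta>"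
proof -
  define v where "v = multiplicity q k"
  have q: "real q > 0" using assms prime_gt_0_nat by simp
  have "v < 2 ^ v" by (rule less_exp)
  also have "2 ^ v \<le> q ^ v" using prime_ge_2_nat[OF assms(4)] by (rule power_mono) simp
  also have "q ^ v \<le> k"
    unfolding v_def using assms by (intro dvd_imp_le multiplicity_dvd) auto
  finally have v_le: "v \<le> n" using assms by auto
  have dvd_iff: "q ^ b dvd k \<longleftrightarrow> b \<le> v" for b
    unfolding v_def using assms by (intro power_dvd_iff_le_multiplicity) (auto dest: not_prime_unit)
  have "real (smooth_part (insert q Q) k) powr \<delta> = (real q ^ v) powr \<delta> * real (smooth_part Q k) powr \<delta>"
    using assms by (simp add: smooth_part_insert v_def powr_mult)
  also have "(real q ^ v) powr \<delta> = r ^ v"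
    using q by (simp add: r_def powr_realpow[symmetric] powr_powr powr_power mult.commute)
  also have "r ^ v = 1 + (\<Sum>b\<in>{1..v}. r ^ b - r ^ (b - 1))"
    by (induction v) (simp_all add: algebra_simps)
  also have "(\<Sum>b\<in>{1..v}. r ^ b - r ^ (b - 1)) = (\<Sum>b\<in>{1..n}. if b \<le> v then r ^ b - r ^ (b - 1) else 0)"
    using v_le by (simp add: sum.inter_filter[symmetric]) (intro sum.cong, auto)
  finally show ?thesis
    by (simp add: dvd_iff)
qed

lemma sum_smooth_part_insert_powr_eq:
  fixes q n :: nat and \<delta> :: real
  defines "r \<equiv> real q powr \<delta>"
  assumes Q: "finite Q" "q \<notin> Q" and q: "prime q"
  shows "(\<Sum>k\<in>{1..n}. real (smooth_part (insert q Q) k) powr \<delta> / real k)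
    = (\<Sum>k\<in>{1..n}. real (smooth_part Q k) powr \<delta> / real k)
      + (\<Sum>b\<in>{1..n}. (r ^ b - r ^ (b - 1))
                      * (\<Sum>k\<in>{k\<in>{1..n}. q ^ b dvd k}. real (smooth_part Q k) powr \<delta> / real k))"
proof -
  define F where "F = (\<lambda>k. real (smooth_part Q k) powr \<delta>)"
  have split: "real (smooth_part (insert q Q) k) powr \<delta> / real k
      = F k / real k + (\<Sum>b\<in>{1..n}. if q ^ b dvd k then (r ^ b - r ^ (b - 1)) * (F k / real k) else 0)"
    if k: "k \<in> {1..n}" for k
  proof -
    define S where "S = (\<Sum>b\<in>{1..n}. if q ^ b dvd k then r ^ b - r ^ (b - 1) else 0)"
    have "real (smooth_part (insert q Q) k) powr \<delta> = (1 + S) * F k"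
      unfolding S_def F_def r_def by (rule smooth_part_insert_powr_eq[OF Q q k])
    moreover have "(\<Sum>b\<in>{1..n}. if q ^ b dvd k then (r ^ b - r ^ (b - 1)) * (F k / real k) else 0)
        = S * (F k / real k)"
      unfolding S_def sum_distrib_right by (intro sum.cong) auto
    ultimately show ?thesis by (simp add: algebra_simps add_divide_distrib)
  qed
  have "(\<Sum>k\<in>{1..n}. real (smooth_part (insert q Q) k) powr \<delta> / real k)
      = (\<Sum>k\<in>{1..n}. F k / real k)
        + (\<Sum>k\<in>{1..n}. \<Sum>b\<in>{1..n}. if q ^ b dvd k then (r ^ b - r ^ (b - 1)) * (F k / real k) else 0)"
    unfolding sum.distrib[symmetric] by (rule sum.cong[OF refl split])
  also have "(\<Sum>k\<in>{1..n}. \<Sum>b\<in>{1..n}. if q ^ b dvd k then (r ^ b - r ^ (b - 1)) * (F k / real k) else 0)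
      = (\<Sum>b\<in>{1..n}. (r ^ b - r ^ (b - 1)) * (\<Sum>k\<in>{k\<in>{1..n}. q ^ b dvd k}. F k / real k))"
    by (subst sum.swap) (simp add: sum.inter_filter[symmetric] sum_distrib_left)
  finally show ?thesis unfolding F_def .
qed

lemma rankin_sum_le:
  fixes \<delta> :: real and Q :: "nat set"
  assumes "finite Q" "\<forall>p\<in>Q. prime p" "0 \<le> \<delta>" "\<delta> < 1"
  shows "(\<Sum>k\<in>{1..n}. real (smooth_part Q k) powr \<delta> / real k)
    \<le> (\<Prod>p\<in>Q. 1 + rankin_factor \<delta> p) * harm n"
  using assms
proof (induction Q arbitrary: n rule: finite_induct)
  case empty
  then show ?case by (simp add: smooth_part_def harm_def divide_inverse)
next
  case (insert q Q)
  define F where "F = (\<lambda>k. real (smooth_part Q k) powr \<delta>)"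
  define r where "r = real q powr \<delta>"
  define W where "W = (\<Prod>p\<in>Q. 1 + rankin_factor \<delta> p)"
  have primes: "\<forall>p\<in>Q. prime p" and q: "prime q" using insert.prems by auto
  have r: "1 \<le> r" "r < real q"
    unfolding r_def using rankin_factor_bounds[OF q] insert.prems by auto
  have W: "W \<ge> 0"
    unfolding W_def using rankin_factor_bounds primes insert.prems
    by (intro prod_nonneg) (meson add_nonneg_nonneg zero_le_one)
  have IH: "(\<Sum>k\<in>{1..m}. F k / real k) \<le> W * harm m" for m
    using insert.IH primes insert.prems unfolding F_def W_def by blast
  have multiples_le: "(\<Sum>k\<in>{k\<in>{1..n}. q ^ b dvd k}. F k / real k) \<le> W * harm n / real q ^ b" for b
  proof -
    have qb: "q ^ b > 0" using q by (simp add: prime_gt_0_nat)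
    have "(\<Sum>k\<in>{k\<in>{1..n}. q ^ b dvd k}. F k / real k) = (\<Sum>j\<in>{1..n div q ^ b}. F j / real j) / real (q ^ b)"
      unfolding sum_multiples_atLeastAtMost[OF qb]
      using smooth_part_prime_power_mult[OF primes q insert.hyps(2)] by (simp add: F_def)
    also have "\<dots> \<le> W * harm n / real (q ^ b)"
    proof (rule divide_right_mono)
      have "(\<Sum>j\<in>{1..n div q ^ b}. F j / real j) \<le> W * harm (n div q ^ b)" by (rule IH)
      also have "\<dots> \<le> W * harm n" using W by (intro mult_left_mono harm_mono) auto
      finally show "(\<Sum>j\<in>{1..n div q ^ b}. F j / real j) \<le> W * harm n" .
    qed simp
    finally show ?thesis by simp
  qed
  have "(\<Sum>k\<in>{1..n}. real (smooth_part (insert q Q) k) powr \<delta> / real k)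
      = (\<Sum>k\<in>{1..n}. F k / real k)
        + (\<Sum>b\<in>{1..n}. (r ^ b - r ^ (b - 1)) * (\<Sum>k\<in>{k\<in>{1..n}. q ^ b dvd k}. F k / real k))"
    unfolding F_def r_def by (rule sum_smooth_part_insert_powr_eq[OF insert.hyps q])
  also have "\<dots> \<le> W * harm n + (\<Sum>b\<in>{1..n}. (r ^ b - r ^ (b - 1)) * (W * harm n / real q ^ b))"
    using r IH[of n] by (intro add_mono sum_mono mult_left_mono multiples_le) (simp_all add: power_increasing)
  also have "(\<Sum>b\<in>{1..n}. (r ^ b - r ^ (b - 1)) * (W * harm n / real q ^ b))
      = W * harm n * (\<Sum>b\<in>{1..n}. (r ^ b - r ^ (b - 1)) / real q ^ b)"
    unfolding sum_distrib_left by (intro sum.cong) simp_all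
  also have "\<dots> \<le> W * harm n * ((r - 1) / (real q - r))"
    using W harm_nonneg[of n] r by (intro mult_left_mono sum_power_diff_div_power_le mult_nonneg_nonneg) auto
  also have "W * harm n + \<dots> = (\<Prod>p\<in>insert q Q. 1 + rankin_factor \<delta> p) * harm n"
    using insert.hyps by (simp add: W_def r_def rankin_factor_def algebra_simps)
  finally show ?case by simp
qed

lemma exp_minus_one_le:
  fixes y :: real
  assumes "0 \<le> y" "y \<le> 1"
  shows "exp y - 1 \<le> 3 * y"
proof -
  have "exp y * (1 - y) \<le> exp y * exp (- y)"
    using exp_ge_add_one_self[of "- y"] by (intro mult_left_mono) auto
  then have "exp y - 1 \<le> y * exp y" by (simp add: exp_minus field_simps)
  also have "y * exp y \<le> y * 3"
  proof (intro mult_left_mono)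
    have "exp y \<le> exp 1" using assms by simp
    then show "exp y \<le> 3" using e_less_272 by linarith
  qed (use assms in simp)
  finally show ?thesis by simp
qed

lemma two_le_ln:
  fixes x :: real
  assumes "8 \<le> x"
  shows "2 \<le> ln x"
proof -
  have "exp (2::real) = exp 1 * exp 1" by (simp flip: exp_add)
  also have "\<dots> \<le> (272 / 100) * (272 / 100)" using e_less_272 by (intro mult_mono) auto
  finally have "exp (2::real) \<le> x" using assms by simp
  then show ?thesis using assms by (subst ln_ge_iff) auto
qed

lemma rankin_factor_le:
  fixes p :: nat and P :: real
  assumes p: "prime p" "real p \<le> P" and P: "2 \<le> ln P"
  shows "rankin_factor (1 / ln P) p \<le> 12 * (ln (real p) / real p) / ln P"
proof -
  have p2: "real p \<ge> 2" using prime_ge_2_nat[OF p(1)] by linarith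
  define y where "y = ln (real p) / ln P"
  have y: "0 \<le> y" "y \<le> 1" using p2 p(2) P by (auto simp: y_def)
  have "real p powr (1 / ln P) = exp y" using p2 by (simp add: powr_def y_def)
  then have num: "real p powr (1 / ln P) - 1 \<le> 3 * y"
    using exp_minus_one_le[OF y] by simp
  have "real p powr (1 / ln P) \<le> real p powr (1 / 2)"
    using p2 P by (intro powr_mono) (auto simp: field_simps)
  also have "\<dots> = sqrt (real p)" using p2 by (simp add: powr_half_sqrt)
  also have "\<dots> \<le> 3 / 4 * real p"
  proof -
    have "sqrt (16 / 9) \<le> sqrt (real p)" using p2 by (intro real_sqrt_le_mono) auto
    then have "4 / 3 \<le> sqrt (real p)" by (simp add: real_sqrt_divide)
    then have "4 / 3 * sqrt (real p) \<le> sqrt (real p) * sqrt (real p)"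
      by (intro mult_right_mono) auto
    then show ?thesis by simp
  qed
  finally have den: "real p / 4 \<le> real p - real p powr (1 / ln P)" by simp
  have "rankin_factor (1 / ln P) p \<le> (3 * y) / (real p / 4)"
    unfolding rankin_factor_def using num den y p2 by (intro frac_le) auto
  also have "\<dots> = 12 * (ln (real p) / real p) / ln P" using p2 P by (simp add: y_def field_simps)
  finally show ?thesis .
qed

lemma prod_rankin_factor_le:
  fixes P :: real
  assumes P: "P \<ge> 8"
  shows "(\<Prod>p | prime p \<and> real p \<le> P. 1 + rankin_factor (1 / ln P) p) \<le> exp 24"
proof -
  define Q where "Q = {p. prime p \<and> real p \<le> P}"
  have lnP: "2 \<le> ln P" using two_le_ln[OF P] .
  have fin: "finite Q" unfolding Q_def
    by (rule finite_subset[of _ "{..nat \<lfloor>P\<rfloor>}"]) (auto simp: le_nat_iff le_floor_iff)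
  have nonneg: "0 \<le> rankin_factor (1 / ln P) p" if "p \<in> Q" for p
    using that lnP by (intro rankin_factor_bounds) (auto simp: Q_def)
  have "(\<Prod>p\<in>Q. 1 + rankin_factor (1 / ln P) p) \<le> (\<Prod>p\<in>Q. exp (rankin_factor (1 / ln P) p))"
    by (intro prod_mono) (auto simp: nonneg exp_ge_add_one_self add_increasing)
  also have "\<dots> = exp (\<Sum>p\<in>Q. rankin_factor (1 / ln P) p)" by (simp add: exp_sum fin)
  also have "(\<Sum>p\<in>Q. rankin_factor (1 / ln P) p) \<le> (\<Sum>p\<in>Q. 12 * (ln (real p) / real p) / ln P)"
    using rankin_factor_le lnP by (intro sum_mono) (auto simp: Q_def)
  also have "\<dots> = 12 / ln P * (\<Sum>p\<in>Q. ln (real p) / real p)"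
    by (simp add: sum_distrib_left sum_divide_distrib mult.commute)
  also have "\<dots> \<le> 12 / ln P * (2 * ln P)"
    using sum_ln_prime_div_prime_le[of P] P lnP by (intro mult_left_mono) (auto simp: Q_def)
  also have "\<dots> = 24" using lnP by simp
  finally show ?thesis unfolding Q_def by simp
qed

subsection \<open>Factorisation into a smooth and a rough part\<close>

lemma prime_factors_prod_power_subset:
  fixes A :: "nat set" and e :: "nat \<Rightarrow> nat"
  assumes "finite A" "\<forall>p\<in>A. prime p"
  shows "prime_factors (\<Prod>p\<in>A. p ^ e p) \<subseteq> A"
proof
  fix x assume x: "x \<in> prime_factors (\<Prod>p\<in>A. p ^ e p)"
  have "prime x" using x by (rule in_prime_factors_imp_prime)
  have "x dvd (\<Prod>p\<in>A. p ^ e p)" using x by (rule in_prime_factors_imp_dvd)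
  then obtain p where p: "p \<in> A" "x dvd p ^ e p"
    unfolding prime_dvd_prod_iff[OF assms(1) \<open>prime x\<close>] by blast
  then have "x dvd p" using \<open>prime x\<close> by (blast intro: prime_dvd_power)
  then have "x = p" using \<open>prime x\<close> assms(2) p(1) by (intro primes_dvd_imp_eq) auto
  then show "x \<in> A" using p by simp
qed

lemma smooth_rough_factorization:
  fixes k :: nat and P :: real
  defines "Q \<equiv> {p. prime p \<and> real p \<le> P}"
  assumes k: "k > 0"
  shows "\<exists>r. k = smooth_part Q k * r \<and> smooth P (smooth_part Q k) \<and> rough P r"
proof -
  define S where "S = prime_factors k"
  define v where "v = (\<lambda>p. multiplicity p k)"
  have fin: "finite S" and primes: "\<forall>p\<in>S. prime p" unfolding S_def by auto
  have "p \<le> nat \<lfloor>P\<rfloor>" if "real p \<le> P" for p :: nat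
  proof -
    have "0 \<le> P" using that of_nat_0_le_iff[of p] by linarith
    then show ?thesis using that by (simp add: le_nat_iff le_floor_iff)
  qed
  then have "Q \<subseteq> {..nat \<lfloor>P\<rfloor>}" by (auto simp: Q_def)
  then have fin_Q: "finite Q" by (rule finite_subset) simp
  have "k = (\<Prod>p\<in>S. p ^ v p)" unfolding S_def v_def using prime_factorization_nat[OF k] .
  also have "\<dots> = (\<Prod>p\<in>S \<inter> Q. p ^ v p) * (\<Prod>p\<in>S - Q. p ^ v p)"
    by (rule prod.Int_Diff[OF fin])
  finally have k_eq: "k = (\<Prod>p\<in>S \<inter> Q. p ^ v p) * (\<Prod>p\<in>S - Q. p ^ v p)" .
  have "multiplicity p k = 0" if "p \<in> Q - S" for p
  proof -
    have "\<not> p dvd k" using that k by (auto simp: Q_def S_def intro: prime_factorsI)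
    then show ?thesis by (simp add: not_dvd_imp_multiplicity_0)
  qed
  then have "smooth_part Q k = (\<Prod>p\<in>Q. if p \<in> S then p ^ v p else 1)"
    unfolding smooth_part_def by (intro prod.cong) (auto simp: v_def)
  also have "\<dots> = (\<Prod>p\<in>Q \<inter> S. p ^ v p)"
    using fin_Q by (simp add: prod.If_cases)
  also have "Q \<inter> S = S \<inter> Q" by blast
  finally have part_eq: "smooth_part Q k = (\<Prod>p\<in>S \<inter> Q. p ^ v p)" .
  have "0 < smooth_part Q k" using smooth_part_pos[of Q k] by (simp add: Q_def)
  moreover have "prime_factors (smooth_part Q k) \<subseteq> S \<inter> Q"
    unfolding part_eq using fin primes by (intro prime_factors_prod_power_subset) auto
  ultimately have "smooth P (smooth_part Q k)" by (auto simp: smooth_def Q_def)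
  moreover have "0 < (\<Prod>p\<in>S - Q. p ^ v p)" using primes by (intro prod_pos) (auto simp: prime_gt_0_nat)
  moreover have "prime_factors (\<Prod>p\<in>S - Q. p ^ v p) \<subseteq> S - Q"
    using fin primes by (intro prime_factors_prod_power_subset) auto
  then have "\<forall>p\<in>prime_factors (\<Prod>p\<in>S - Q. p ^ v p). real p > P"
    using primes by (auto simp: Q_def)
  ultimately show ?thesis using k_eq part_eq by (auto simp: rough_def)
qed

lemma coprime_smooth_rough:
  assumes "smooth P m" "rough P n"
  shows "coprime m n"
proof (rule ccontr)
  assume "\<not> coprime m n"
  then obtain p where "prime p" "p dvd gcd m n"
    using prime_factor_nat[of "gcd m n"] by (auto simp: coprime_iff_gcd_eq_1)
  then have "p dvd m" "p dvd n" by auto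
  moreover have "m > 0" "n > 0" using assms by (auto simp: smooth_def rough_def)
  ultimately have "p \<in> prime_factors m" "p \<in> prime_factors n"
    using \<open>prime p\<close> by (auto intro: prime_factorsI)
  then have "real p \<le> P" "real p > P" using assms unfolding smooth_def rough_def by blast+
  then show False by simp
qed

lemma smooth_rough_factorization_unique:
  assumes "smooth P m" "rough P n" "smooth P m'" "rough P n'" "m * n = m' * n'"
  shows "m = m'"
proof (rule dvd_antisym)
  have "m dvd m' * n'" using assms(5) by (metis dvd_triv_left)
  then show "m dvd m'"
    using coprime_smooth_rough[OF assms(1,4)] by (simp add: coprime_dvd_mult_left_iff)
  have "m' dvd m * n" using assms(5) by (metis dvd_triv_left)
  then show "m' dvd m"
    using coprime_smooth_rough[OF assms(3,2)] by (simp add: coprime_dvd_mult_left_iff)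
qed

lemma inverse_nat_powr_Complex:
  fixes n :: nat and s t :: real
  assumes "n > 0"
  shows "1 / (of_nat n powr Complex s t) = complex_of_real (real n powr (- s)) * cis (- (t * ln (real n)))"
proof -
  have "of_nat n powr Complex s t = exp (Complex s t * of_real (ln (real n)))"
    using assms by (simp add: powr_def)
  also have "Complex s t * of_real (ln (real n)) = Complex (s * ln (real n)) (t * ln (real n))"
    by (simp add: complex_eq_iff)
  also have "exp (Complex (s * ln (real n)) (t * ln (real n)))
      = of_real (exp (s * ln (real n))) * cis (t * ln (real n))"
    by (simp add: exp_eq_polar)
  finally have "of_nat n powr Complex s t = of_real (exp (s * ln (real n))) * cis (t * ln (real n))" .
  then have "1 / (of_nat n powr Complex s t)
      = inverse (complex_of_real (exp (s * ln (real n)))) * inverse (cis (t * ln (real n)))"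
    by (simp add: divide_inverse)
  also have "\<dots> = complex_of_real (real n powr (- s)) * cis (- (t * ln (real n)))"
    using assms by (simp add: powr_def exp_minus)
  finally show ?thesis .
qed

lemma cis_ln_mult:
  fixes m n :: nat
  assumes "m > 0" "n > 0"
  shows "cis (- (t * ln (real m))) * cis (- (t * ln (real n))) = cis (- (t * ln (real (m * n))))"
  using assms by (simp add: cis_mult ln_mult algebra_simps)

lemma abs_exp_minus_one_le:
  fixes z :: real
  assumes "\<bar>z\<bar> \<le> 1"
  shows "\<bar>exp z - 1\<bar> \<le> 3 * \<bar>z\<bar>"
proof (cases "z \<ge> 0")
  case True
  then show ?thesis using exp_minus_one_le[of z] assms by simp
next
  case False
  then have "\<bar>exp z - 1\<bar> = 1 - exp z" "\<bar>z\<bar> = - z" by simp_all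
  then show ?thesis using exp_ge_add_one_self[of z] False by linarith
qed

lemma powr_minus_eq_exp_div_sqrt:
  fixes k :: nat and s :: real
  assumes "k > 0"
  shows "real k powr (- s) = exp ((1 / 2 - s) * ln (real k)) / sqrt (real k)"
proof -
  have "real k powr (- s) = real k powr (1 / 2 - s) * real k powr (- (1 / 2))"
    by (simp flip: powr_add)
  also have "real k powr (- (1 / 2)) = 1 / sqrt (real k)"
    using assms by (simp add: powr_minus_divide powr_half_sqrt)
  also have "real k powr (1 / 2 - s) = exp ((1 / 2 - s) * ln (real k))"
    using assms by (simp add: powr_def)
  finally show ?thesis by simp
qed

lemma powr_minus_le_two_div_sqrt:
  fixes k :: nat and s :: real
  assumes "k > 0" "\<bar>(1 / 2 - s) * ln (real k)\<bar> \<le> 1 / 2"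
  shows "real k powr (- s) \<le> 2 / sqrt (real k)"
proof -
  have "exp ((1 / 2 - s) * ln (real k)) \<le> exp (1 / 2)"
    using assms by simp
  also have "exp (1 / 2 :: real) \<le> 2"
  proof (rule power2_le_imp_le)
    have "(exp (1 / 2 :: real))\<^sup>2 = exp 1" by (simp add: power2_eq_square flip: exp_add)
    then show "(exp (1 / 2 :: real))\<^sup>2 \<le> 2\<^sup>2" using e_less_272 by simp
  qed simp
  finally show ?thesis
    using assms by (simp add: powr_minus_eq_exp_div_sqrt divide_right_mono)
qed

lemma abs_powr_minus_diff_le:
  fixes k :: nat and s \<eta> :: real
  assumes "k > 0" "\<bar>(1 / 2 - s) * ln (real k)\<bar> \<le> \<eta>" "\<eta> \<le> 1"
  shows "\<bar>real k powr (- s) - real k powr (- 1 / 2)\<bar> \<le> 3 * \<eta> / sqrt (real k)"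
proof -
  have "\<bar>real k powr (- s) - real k powr (- 1 / 2)\<bar>
      = \<bar>exp ((1 / 2 - s) * ln (real k)) - 1\<bar> / sqrt (real k)"
    using powr_minus_eq_exp_div_sqrt[OF assms(1), of s] powr_minus_eq_exp_div_sqrt[OF assms(1), of "1 / 2"]
    by (simp add: diff_divide_distrib[symmetric] abs_divide)
  also have "\<dots> \<le> 3 * \<eta> / sqrt (real k)"
    using abs_exp_minus_one_le[of "(1 / 2 - s) * ln (real k)"] assms by (intro divide_right_mono) auto
  finally show ?thesis .
qed

lemma sum_inverse_greaterThanAtMost_le:
  fixes M K :: nat
  assumes "1 \<le> M" "M \<le> K"
  shows "(\<Sum>k\<in>{M<..K}. 1 / real k) \<le> ln (real K) - ln (real M)"
proof -
  have "{1..K} = {1..M} \<union> {M<..K}" using assms by auto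
  then have "harm K = harm M + (\<Sum>k\<in>{M<..K}. 1 / real k :: real)"
    unfolding harm_def by (simp add: divide_inverse) (subst sum.union_disjoint, auto)
  then show ?thesis
    using euler_mascheroni_sequence_decreasing[of M K] assms by simp
qed

lemma harm_le_ln_plus_one:
  fixes K :: nat
  assumes "K \<ge> 1"
  shows "harm K \<le> ln (real K) + (1 :: real)"
  using euler_mascheroni_sequence_decreasing[of 1 K] assms by (simp add: harm_def)

lemma two_pi_le_exp_two: "2 * pi \<le> exp (2 :: real)"
proof -
  have "exp 1 - 5837465777 / 2147483648 \<ge> - inverse (2 ^ 32 :: real)"
    using e_approx_32 by (simp only: abs_le_iff) linarith
  then have "27 / 10 \<le> exp (1 :: real)" by simp
  then have "(27 / 10) * (27 / 10) \<le> exp (1 :: real) * exp 1" by (intro mult_mono) auto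
  also have "\<dots> = exp 2" by (simp flip: exp_add)
  finally show ?thesis using pi_approx by simp
qed

subsection \<open>The approximation error\<close>

locale smooth_rough_approximation =
  fixes T P \<epsilon> \<sigma> :: real
  assumes T_ge: "2 \<le> T" and P_ge: "8 \<le> P"
    and eps_gt: "1 / ln T < \<epsilon>" and eps_lt: "\<epsilon> < 1 / 10"
    and sigma_ge: "1 / 2 - 1 / ln T \<le> \<sigma>" and sigma_le: "\<sigma> \<le> 1 / 2 + 1 / ln T"
begin

definition K :: nat where "K = nat \<lfloor>sqrt (T / pi)\<rfloor>"

definition X :: real where "X = T powr \<epsilon>"

definition Y :: real where "Y = T powr (1 / 2 - 2 * \<epsilon>)"

definition A :: "nat set" where "A = {m. smooth P m \<and> real m \<le> X}"

definition B :: "nat set" where "B = {n. rough P n \<and> real n \<le> Y}"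

definition Q :: "nat set" where "Q = {p. prime p \<and> real p \<le> P}"

definition AB_product :: "nat \<Rightarrow> bool" where
  "AB_product k \<longleftrightarrow> (\<exists>m\<in>A. \<exists>n\<in>B. m * n = k)"

definition coeff :: "nat \<Rightarrow> real" where
  "coeff k = (\<Sum>x\<in>{x\<in>A \<times> B. fst x * snd x = k}. real (fst x) powr (- 1 / 2) * real (snd x) powr (- \<sigma>))"

definition jump :: "nat \<Rightarrow> real \<Rightarrow> real" where
  "jump k = jump_coeff (- coeff k) (real k powr (- \<sigma>)) (2 * pi * (real k)\<^sup>2)"

definition diag :: "nat \<Rightarrow> real" where
  "diag k = (if AB_product k then 36 * \<epsilon> / real k else 4 / real k)"

definition F :: "real \<Rightarrow> complex" where
  "F t = (\<Sum>n\<in>{1..nat \<lfloor>sqrt (t / (2 * pi))\<rfloor>}. 1 / (of_nat n powr Complex \<sigma> t))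
       - (\<Sum>m\<in>A. 1 / (of_nat m powr Complex (1 / 2) t)) * (\<Sum>n\<in>B. 1 / (of_nat n powr Complex \<sigma> t))"

lemma T_pos: "0 < T" and ln_T_pos: "0 < ln T"
  using T_ge by auto

lemma one_lt_eps_ln_T: "1 < \<epsilon> * ln T"
  using eps_gt ln_T_pos by (simp add: field_simps)

lemma eps_pos: "0 < \<epsilon>"
  using one_lt_eps_ln_T ln_T_pos by (smt (verit) mult_nonpos_nonneg)

lemma ten_lt_ln_T: "10 < ln T"
  using one_lt_eps_ln_T eps_lt ln_T_pos mult_right_mono[of \<epsilon> "1 / 10" "ln T"] by linarith

lemma sigma_near: "\<bar>\<sigma> - 1 / 2\<bar> \<le> 1 / ln T"
  using sigma_ge sigma_le by (simp add: abs_le_iff)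

lemma abs_sigma_ln_le: "1 \<le> x \<Longrightarrow> \<bar>(1 / 2 - \<sigma>) * ln x\<bar> \<le> ln x / ln T"
  using sigma_near ln_T_pos mult_right_mono[of "\<bar>1 / 2 - \<sigma>\<bar>" "1 / ln T" "ln x"]
  by (simp add: abs_mult abs_minus_commute)

lemma powr_minus_sigma_le:
  assumes "1 \<le> k" "real k \<le> sqrt T"
  shows "real k powr (- \<sigma>) \<le> 2 / sqrt (real k)"
proof (rule powr_minus_le_two_div_sqrt)
  have "ln (real k) \<le> ln (sqrt T)" using assms T_pos by simp
  then have "ln (real k) \<le> ln T / 2" using T_pos by (simp add: ln_sqrt)
  then have "ln (real k) / ln T \<le> 1 / 2" using ln_T_pos by (simp add: field_simps)
  moreover have "\<bar>(1 / 2 - \<sigma>) * ln (real k)\<bar> \<le> ln (real k) / ln T"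
    using abs_sigma_ln_le[of "real k"] assms by simp
  ultimately show "\<bar>(1 / 2 - \<sigma>) * ln (real k)\<bar> \<le> 1 / 2" by linarith
qed (use assms in auto)

lemma finite_A: "finite A" and finite_B: "finite B" and finite_Q: "finite Q"
  unfolding A_def B_def Q_def
  by (auto intro: finite_subset[of _ "{..nat \<lfloor>X\<rfloor>}"] finite_subset[of _ "{..nat \<lfloor>Y\<rfloor>}"]
      finite_subset[of _ "{..nat \<lfloor>P\<rfloor>}"] simp: le_nat_iff le_floor_iff)

lemma K_le: "real K \<le> sqrt (T / pi)" "real K \<le> sqrt T" "(real K)\<^sup>2 \<le> T / pi"
proof -
  have "K \<le> nat \<lfloor>sqrt (T / pi)\<rfloor>" by (simp add: K_def)
  then show K: "real K \<le> sqrt (T / pi)" using T_pos by (simp add: le_nat_iff le_floor_iff)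
  show "real K \<le> sqrt T"
    using K order.trans[OF K real_sqrt_le_mono[of "T / pi" T]] T_pos pi_ge_two by (simp add: field_simps)
  show "(real K)\<^sup>2 \<le> T / pi"
    using power_mono[OF K, of 2] T_pos by simp
qed

lemma harm_K_le: "harm K \<le> ln T"
proof (cases "K = 0")
  case False
  have "ln (real K) \<le> ln (sqrt T)" using False K_le(2) T_pos by simp
  then have "ln (real K) \<le> ln T / 2" using T_pos by (simp add: ln_sqrt)
  then show ?thesis using harm_le_ln_plus_one[of K] False ten_lt_ln_T by simp
qed (use ln_T_pos in \<open>simp add: harm_def\<close>)

text \<open>Since eps log T > 1, XY = T^(1/2) exp (- eps log T) <= T^(1/2) / e, so every product mn
  with m in A and n in B is counted by the partial zeta sum from t = T on.\<close>

lemma two_pi_XY_sq_le: "2 * pi * (X * Y)\<^sup>2 \<le> T"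
proof -
  have "(X * Y)\<^sup>2 = T powr (2 * (1 / 2 - \<epsilon>))"
    using T_pos powr_power[of T "1 / 2 - \<epsilon>" 2] by (simp add: X_def Y_def flip: powr_add)
  also have "\<dots> = exp (ln T + - 2 * (\<epsilon> * ln T))"
    using T_pos by (simp add: powr_def algebra_simps)
  also have "\<dots> = T * exp (- 2 * (\<epsilon> * ln T))"
    by (simp only: exp_add exp_ln[OF T_pos])
  also have "\<dots> \<le> T * exp (- 2)"
    using one_lt_eps_ln_T T_pos by (intro mult_left_mono) auto
  finally have "2 * pi * (X * Y)\<^sup>2 \<le> T * (2 * pi / exp 2)"
    by (simp add: exp_minus field_simps)
  also have "\<dots> \<le> T" using two_pi_le_exp_two T_pos by (simp add: field_simps)
  finally show ?thesis .
qed

lemma A_B_bounds: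
  assumes "m \<in> A" "n \<in> B"
  shows "1 \<le> m" "1 \<le> n" "ln (real m) \<le> \<epsilon> * ln T" "real n \<le> sqrt T"
    "2 * pi * (real (m * n))\<^sup>2 \<le> T" "m * n \<in> {1..K}"
proof -
  show m: "1 \<le> m" and n: "1 \<le> n"
    using assms by (auto simp: A_def B_def smooth_def rough_def)
  have mX: "real m \<le> X" and nY: "real n \<le> Y" using assms by (auto simp: A_def B_def)
  then have "ln (real m) \<le> ln X"
    using m T_pos by (subst ln_le_cancel_iff) (auto simp: X_def)
  then show "ln (real m) \<le> \<epsilon> * ln T"
    using T_pos by (simp add: X_def ln_powr)
  have "Y \<le> T powr (1 / 2)" unfolding Y_def using T_ge eps_pos by (intro powr_mono) auto
  then show "real n \<le> sqrt T" using nY T_pos by (simp add: powr_half_sqrt)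
  have "real (m * n) \<le> X * Y" using mX nY by (simp add: mult_mono)
  then have "2 * pi * (real (m * n))\<^sup>2 \<le> 2 * pi * (X * Y)\<^sup>2" by (simp add: power_mono)
  then show two_pi: "2 * pi * (real (m * n))\<^sup>2 \<le> T" using two_pi_XY_sq_le by linarith
  have "(real (m * n))\<^sup>2 \<le> T / (2 * pi)"
    using two_pi by (simp add: pos_le_divide_eq mult.commute)
  also have "\<dots> \<le> T / pi"
    using T_pos by (intro divide_left_mono) auto
  finally have "(real (m * n))\<^sup>2 \<le> T / pi" .
  then have "real (m * n) \<le> sqrt (T / pi)" by (simp add: real_le_rsqrt)
  then show "m * n \<in> {1..K}" using m n T_pos by (simp add: K_def le_nat_iff le_floor_iff)
qed

lemma coeff_eq:
  assumes "m \<in> A" "n \<in> B"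
  shows "coeff (m * n) = real m powr (- 1 / 2) * real n powr (- \<sigma>)"
proof -
  have "{x\<in>A \<times> B. fst x * snd x = m * n} = {(m, n)}"
  proof (intro equalityI subsetI)
    fix x assume x: "x \<in> {x\<in>A \<times> B. fst x * snd x = m * n}"
    then have "fst x = m"
      using assms by (intro smooth_rough_factorization_unique[of P "fst x" "snd x" m n]) (auto simp: A_def B_def)
    moreover have "m > 0" using A_B_bounds[OF assms] by simp
    ultimately show "x \<in> {(m, n)}" using x by (cases x) auto
  qed (use assms in auto)
  then show ?thesis unfolding coeff_def by simp
qed

lemma coeff_eq_0: "\<not> AB_product k \<Longrightarrow> coeff k = 0"
  unfolding coeff_def AB_product_def by (rule sum.neutral) auto

lemma coeff_bounds:
  assumes "k \<in> {1..K}"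
  shows "0 \<le> coeff k" "coeff k \<le> 2 / sqrt (real k)"
proof -
  have "0 \<le> coeff k \<and> coeff k \<le> 2 / sqrt (real k)"
  proof (cases "AB_product k")
    case True
    then obtain m n where mn: "m \<in> A" "n \<in> B" "k = m * n" by (auto simp: AB_product_def)
    note bounds = A_B_bounds[OF mn(1,2)]
    have "coeff k = 1 / sqrt (real m) * real n powr (- \<sigma>)"
      using coeff_eq[OF mn(1,2)] bounds by (simp add: mn(3) powr_minus_divide powr_half_sqrt)
    also have "\<dots> \<le> 1 / sqrt (real m) * (2 / sqrt (real n))"
      using powr_minus_sigma_le[of n] bounds by (intro mult_left_mono) auto
    finally show ?thesis
      using coeff_eq[OF mn(1,2)] by (simp add: mn(3) real_sqrt_mult)
  qed (simp add: coeff_eq_0)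
  then show "0 \<le> coeff k" "coeff k \<le> 2 / sqrt (real k)" by auto
qed

lemma partial_zeta_sum_eq:
  assumes t: "t \<in> {T..2 * T}"
  shows "(\<Sum>n\<in>{1..nat \<lfloor>sqrt (t / (2 * pi))\<rfloor>}. 1 / (of_nat n powr Complex \<sigma> t))
    = (\<Sum>k\<in>{1..K}. complex_of_real (if 2 * pi * (real k)\<^sup>2 \<le> t then real k powr (- \<sigma>) else 0)
                     * cis (- (t * ln (real k))))"
proof -
  have t_pos: "t > 0" using t T_pos by auto
  have "k \<le> nat \<lfloor>sqrt (t / (2 * pi))\<rfloor> \<longleftrightarrow> real k \<le> sqrt (t / (2 * pi))" for k
    using t_pos by (simp add: le_nat_iff le_floor_iff)
  also have "real k \<le> sqrt (t / (2 * pi)) \<longleftrightarrow> (real k)\<^sup>2 \<le> t / (2 * pi)" for k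
    using real_le_rsqrt sqrt_ge_absD[of "real k"] by auto
  also have "(real k)\<^sup>2 \<le> t / (2 * pi) \<longleftrightarrow> 2 * pi * (real k)\<^sup>2 \<le> t" for k
    by (simp add: pos_le_divide_eq mult.commute)
  finally have floor_iff: "k \<le> nat \<lfloor>sqrt (t / (2 * pi))\<rfloor> \<longleftrightarrow> 2 * pi * (real k)\<^sup>2 \<le> t" for k .
  moreover have "2 * pi * (real k)\<^sup>2 \<le> t \<Longrightarrow> k \<le> K" for k
  proof -
    assume "2 * pi * (real k)\<^sup>2 \<le> t"
    then have "(real k)\<^sup>2 \<le> T / pi" using t by (simp add: field_simps)
    then show "k \<le> K" using T_pos by (simp add: K_def le_nat_iff le_floor_iff real_le_rsqrt)
  qed
  ultimately have "{1..nat \<lfloor>sqrt (t / (2 * pi))\<rfloor>} = {k\<in>{1..K}. 2 * pi * (real k)\<^sup>2 \<le> t}"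
    using floor_iff by auto
  then have "(\<Sum>n\<in>{1..nat \<lfloor>sqrt (t / (2 * pi))\<rfloor>}. 1 / (of_nat n powr Complex \<sigma> t))
      = (\<Sum>k\<in>{k\<in>{1..K}. 2 * pi * (real k)\<^sup>2 \<le> t}. complex_of_real (real k powr (- \<sigma>)) * cis (- (t * ln (real k))))"
    by (intro sum.cong) (auto simp: inverse_nat_powr_Complex)
  also have "\<dots> = (\<Sum>k\<in>{1..K}. complex_of_real (if 2 * pi * (real k)\<^sup>2 \<le> t then real k powr (- \<sigma>) else 0)
                     * cis (- (t * ln (real k))))"
    by (subst sum.inter_filter) (auto intro: sum.cong)
  finally show ?thesis .
qed

lemma A_B_product_sum_eq:
  "(\<Sum>m\<in>A. 1 / (of_nat m powr Complex (1 / 2) t)) * (\<Sum>n\<in>B. 1 / (of_nat n powr Complex \<sigma> t))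
    = (\<Sum>k\<in>{1..K}. complex_of_real (coeff k) * cis (- (t * ln (real k))))"
proof -
  define f where "f = (\<lambda>x :: nat \<times> nat. complex_of_real (real (fst x) powr (- 1 / 2) * real (snd x) powr (- \<sigma>))
                                        * cis (- (t * ln (real (fst x * snd x)))))"
  have "(\<Sum>m\<in>A. 1 / (of_nat m powr Complex (1 / 2) t)) * (\<Sum>n\<in>B. 1 / (of_nat n powr Complex \<sigma> t))
      = (\<Sum>m\<in>A. \<Sum>n\<in>B. (1 / (of_nat m powr Complex (1 / 2) t)) * (1 / (of_nat n powr Complex \<sigma> t)))"
    by (rule sum_product)
  also have "\<dots> = (\<Sum>m\<in>A. \<Sum>n\<in>B. f (m, n))"
  proof (intro sum.cong refl)
    fix m n assume mn: "m \<in> A" "n \<in> B"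
    then have m: "m > 0" and n: "n > 0" using A_B_bounds(1,2)[OF mn] by auto
    have "f (m, n) = complex_of_real (real m powr (- 1 / 2) * real n powr (- \<sigma>))
        * (cis (- (t * ln (real m))) * cis (- (t * ln (real n))))"
      unfolding f_def cis_ln_mult[OF m n] by simp
    then show "(1 / (of_nat m powr Complex (1 / 2) t)) * (1 / (of_nat n powr Complex \<sigma> t)) = f (m, n)"
      unfolding inverse_nat_powr_Complex[OF m] inverse_nat_powr_Complex[OF n] by (simp add: algebra_simps)
  qed
  also have "\<dots> = (\<Sum>x\<in>A \<times> B. f x)" by (simp add: sum.cartesian_product)
  also have "\<dots> = (\<Sum>k\<in>{1..K}. \<Sum>x\<in>{x\<in>A \<times> B. fst x * snd x = k}. f x)"
    using finite_A finite_B A_B_bounds by (intro sum.group[symmetric]) auto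
  also have "\<dots> = (\<Sum>k\<in>{1..K}. complex_of_real (coeff k) * cis (- (t * ln (real k))))"
    unfolding coeff_def f_def by (simp add: sum_distrib_right)
  finally show ?thesis .
qed

lemma F_eq:
  assumes "t \<in> {T..2 * T}"
  shows "F t = (\<Sum>k\<in>{1..K}. complex_of_real (jump k t) * cis (- (t * ln (real k))))"
  unfolding F_def partial_zeta_sum_eq[OF assms] A_B_product_sum_eq
  by (simp add: sum_subtractf[symmetric] jump_def jump_coeff_def algebra_simps)

lemma jump_sq_le_diag:
  assumes k: "k \<in> {1..K}" and t: "t \<in> {T..2 * T}"
  shows "(jump k t)\<^sup>2 \<le> diag k"
proof (cases "AB_product k")
  case True
  then obtain m n where mn: "m \<in> A" "n \<in> B" "k = m * n" by (auto simp: AB_product_def)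
  note bounds = A_B_bounds[OF mn(1,2)]
  have jump_eq: "jump k t = real n powr (- \<sigma>) * (real m powr (- \<sigma>) - real m powr (- 1 / 2))"
    using bounds t coeff_eq[OF mn(1,2)]
    by (simp add: jump_def jump_coeff_def mn(3) powr_mult algebra_simps)
  have diff_le: "\<bar>real m powr (- \<sigma>) - real m powr (- 1 / 2)\<bar> \<le> 3 * \<epsilon> / sqrt (real m)"
  proof (rule abs_powr_minus_diff_le)
    have "ln (real m) / ln T \<le> \<epsilon>" using bounds(3) ln_T_pos by (simp add: field_simps)
    moreover have "\<bar>(1 / 2 - \<sigma>) * ln (real m)\<bar> \<le> ln (real m) / ln T"
      using abs_sigma_ln_le[of "real m"] bounds by simp
    ultimately show "\<bar>(1 / 2 - \<sigma>) * ln (real m)\<bar> \<le> \<epsilon>" by linarith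
  qed (use bounds eps_lt in auto)
  have "\<bar>jump k t\<bar> \<le> (2 / sqrt (real n)) * (3 * \<epsilon> / sqrt (real m))"
    unfolding jump_eq abs_mult using powr_minus_sigma_le[of n] bounds diff_le by (intro mult_mono) auto
  also have "\<dots> = 6 * \<epsilon> / sqrt (real k)" by (simp add: mn(3) real_sqrt_mult field_simps)
  finally have "(jump k t)\<^sup>2 \<le> (6 * \<epsilon> / sqrt (real k))\<^sup>2"
    by (metis abs_ge_zero power2_abs power_mono)
  also have "\<dots> = 36 * \<epsilon> * \<epsilon> / real k" using k by (simp add: power_divide power2_eq_square)
  also have "\<dots> \<le> 36 * \<epsilon> / real k"
    using eps_pos eps_lt by (intro divide_right_mono) (auto simp: mult_le_cancel_left1)
  finally show ?thesis using True by (simp add: diag_def)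
next
  case False
  have "0 \<le> real k powr (- \<sigma>)" "real k powr (- \<sigma>) \<le> 2 / sqrt (real k)"
    using powr_minus_sigma_le[of k] k K_le(2) by auto
  then have "\<bar>jump k t\<bar> \<le> 2 / sqrt (real k)"
    by (simp add: jump_def jump_coeff_def coeff_eq_0[OF False])
  then have "(jump k t)\<^sup>2 \<le> (2 / sqrt (real k))\<^sup>2"
    by (metis abs_ge_zero power2_abs power_mono)
  then show ?thesis using False k by (simp add: diag_def power_divide)
qed

lemma integral_F_le: "integral {T..2 * T} (\<lambda>t. (cmod (F t))\<^sup>2) \<le> T * (\<Sum>k\<in>{1..K}. diag k) + 128 * (real K)\<^sup>2"
proof -
  have "integral {T..2 * T} (\<lambda>t. (cmod (F t))\<^sup>2)
      = integral {T..2 * T} (\<lambda>t. (cmod (\<Sum>k\<in>{1..K}. complex_of_real (jump k t) * cis (- (t * ln (real k)))))\<^sup>2)"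
    by (intro integral_cong) (simp add: F_eq)
  also have "\<dots> \<le> (2 * T - T) * (\<Sum>k\<in>{1..K}. diag k) + 128 * (real K)\<^sup>2"
    unfolding jump_def
  proof (rule mean_value_jump_dirichlet_le)
    fix k assume k: "k \<in> {1..K}"
    have "real k powr (- \<sigma>) \<le> 2 / sqrt (real k)"
      using powr_minus_sigma_le[of k] K_le(2) k by auto
    moreover have "4 / sqrt (real k) = 2 / sqrt (real k) + 2 / sqrt (real k)" by simp
    ultimately show "\<bar>- coeff k\<bar> + \<bar>real k powr (- \<sigma>)\<bar> \<le> 4 / sqrt (real k)"
      using coeff_bounds[OF k] by simp
  qed (use T_pos jump_sq_le_diag in \<open>auto simp: jump_def\<close>)
  finally show ?thesis by simp
qed

text \<open>If k is not such a product, its rough part exceeds Y or its smooth part exceeds X.\<close>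

lemma diag_le:
  assumes k: "k \<in> {1..K}"
  shows "diag k \<le> 36 * \<epsilon> / real k
    + 4 * ((if Y < real k then 1 / real k else 0) + (if X < real (smooth_part Q k) then 1 / real k else 0))"
proof (cases "AB_product k")
  case False
  obtain r where r: "k = smooth_part Q k * r" "smooth P (smooth_part Q k)" "rough P r"
    using smooth_rough_factorization[of k P, folded Q_def] k by auto
  have "X < real (smooth_part Q k) \<or> Y < real r"
  proof (rule ccontr)
    assume "\<not> (X < real (smooth_part Q k) \<or> Y < real r)"
    then have "smooth_part Q k \<in> A" "r \<in> B" using r by (auto simp: A_def B_def)
    moreover have "smooth_part Q k * r = k" using r(1) by simp
    ultimately show False using False unfolding AB_product_def by blast
  qed
  moreover have "r \<le> k"
  proof -
    have "1 \<le> smooth_part Q k" using r(2) by (simp add: smooth_def)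
    then have "1 * r \<le> smooth_part Q k * r" by (rule mult_le_mono1)
    then show ?thesis using r(1) by simp
  qed
  ultimately have "X < real (smooth_part Q k) \<or> Y < real k" by linarith
  then have "4 / real k \<le> 4 * ((if Y < real k then 1 / real k else 0)
      + (if X < real (smooth_part Q k) then 1 / real k else 0))"
    by auto
  moreover have "0 \<le> 36 * \<epsilon> / real k" using eps_pos by simp
  ultimately show ?thesis using False by (simp add: diag_def)
qed (simp add: diag_def)

lemma sum_inverse_gt_Y_le: "(\<Sum>k\<in>{1..K}. if Y < real k then 1 / real k else 0) \<le> 2 * \<epsilon> * ln T + 1"
proof -
  define M where "M = nat \<lfloor>Y\<rfloor>"
  have Y: "Y \<ge> 1" unfolding Y_def using T_ge eps_lt by (intro ge_one_powr_ge_zero) auto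
  then have M: "M \<ge> 1" "Y < real M + 1" "real M \<le> Y" unfolding M_def by linarith+
  have "(\<Sum>k\<in>{1..K}. if Y < real k then 1 / real k else 0) = (\<Sum>k\<in>{k\<in>{1..K}. Y < real k}. 1 / real k)"
    by (rule sum.inter_filter[symmetric]) simp
  also have "{k\<in>{1..K}. Y < real k} = {M<..K}"
    using M by (auto simp: M_def le_nat_iff le_floor_iff not_le[symmetric])
  also have "(\<Sum>k\<in>{M<..K}. 1 / real k) \<le> 2 * \<epsilon> * ln T + 1"
  proof (cases "M < K")
    case True
    have "ln (real K) \<le> ln (sqrt T)" using True K_le(2) T_pos by (subst ln_le_cancel_iff) auto
    then have "ln (real K) \<le> ln T / 2" using T_pos by (simp add: ln_sqrt)
    moreover have "1 \<le> real M" using M(1) by simp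
    then have "ln (Y / 2) \<le> ln (real M)" by (subst ln_le_cancel_iff) (use M Y \<open>1 \<le> real M\<close> in auto)
    then have "(1 / 2 - 2 * \<epsilon>) * ln T - 1 \<le> ln (real M)"
      using Y T_pos ln_2_less_1 by (simp add: ln_div Y_def ln_powr)
    ultimately show ?thesis
      using sum_inverse_greaterThanAtMost_le[of M K] True M by (simp add: algebra_simps)
  qed (use eps_pos ln_T_pos in simp)
  finally show ?thesis .
qed

text \<open>Rankin's trick with delta = 1/log P, for which X^(-delta) = exp (- eps log T / log P).\<close>

lemma sum_inverse_large_smooth_part_le:
  "(\<Sum>k\<in>{1..K}. if X < real (smooth_part Q k) then 1 / real k else 0)
    \<le> exp (- \<epsilon> * ln T / ln P) * exp 24 * ln T"
proof -
  define \<delta> where "\<delta> = 1 / ln P"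
  have lnP: "2 \<le> ln P" using two_le_ln[OF P_ge] .
  have \<delta>: "0 \<le> \<delta>" "\<delta> < 1" using lnP by (auto simp: \<delta>_def field_simps)
  have X_pos: "X > 0" using T_pos by (simp add: X_def)
  have X_powr: "X powr (- \<delta>) = exp (- \<epsilon> * ln T / ln P)"
    using T_pos by (simp add: X_def \<delta>_def powr_powr powr_def)
  have "(if X < real (smooth_part Q k) then 1 / real k else 0)
      \<le> X powr (- \<delta>) * (real (smooth_part Q k) powr \<delta> / real k)" if "k \<in> {1..K}" for k
  proof (cases "X < real (smooth_part Q k)")
    case True
    have "1 \<le> (real (smooth_part Q k) / X) powr \<delta>"
      using True X_pos \<delta> by (intro ge_one_powr_ge_zero) (auto simp: field_simps)
    also have "\<dots> = X powr (- \<delta>) * real (smooth_part Q k) powr \<delta>"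
      using X_pos by (simp add: powr_divide powr_minus field_simps)
    finally show ?thesis using True that by (simp add: divide_right_mono)
  qed simp
  then have "(\<Sum>k\<in>{1..K}. if X < real (smooth_part Q k) then 1 / real k else 0)
      \<le> (\<Sum>k\<in>{1..K}. X powr (- \<delta>) * (real (smooth_part Q k) powr \<delta> / real k))"
    by (rule sum_mono)
  also have "\<dots> = X powr (- \<delta>) * (\<Sum>k\<in>{1..K}. real (smooth_part Q k) powr \<delta> / real k)"
    by (simp add: sum_distrib_left)
  also have "(\<Sum>k\<in>{1..K}. real (smooth_part Q k) powr \<delta> / real k) \<le> exp 24 * ln T"
  proof -
    have "(\<Sum>k\<in>{1..K}. real (smooth_part Q k) powr \<delta> / real k) \<le> (\<Prod>p\<in>Q. 1 + rankin_factor \<delta> p) * harm K"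
      using finite_Q \<delta> by (intro rankin_sum_le) (auto simp: Q_def)
    also have "\<dots> \<le> exp 24 * ln T"
      using prod_rankin_factor_le[OF P_ge] harm_K_le harm_nonneg[of K]
      by (intro mult_mono) (auto simp: Q_def \<delta>_def)
    finally show ?thesis .
  qed
  finally show ?thesis
    using X_powr by (simp add: mult_left_mono mult.assoc)
qed

lemma sum_diag_le: "(\<Sum>k\<in>{1..K}. diag k) \<le> 48 * \<epsilon> * ln T + 4 * exp 24 * ln T * exp (- \<epsilon> * ln T / ln P)"
proof -
  have "(\<Sum>k\<in>{1..K}. diag k) \<le> (\<Sum>k\<in>{1..K}. 36 * \<epsilon> / real k
      + 4 * ((if Y < real k then 1 / real k else 0) + (if X < real (smooth_part Q k) then 1 / real k else 0)))"
    by (intro sum_mono diag_le)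
  also have "\<dots> = 36 * \<epsilon> * harm K + 4 * ((\<Sum>k\<in>{1..K}. if Y < real k then 1 / real k else 0)
      + (\<Sum>k\<in>{1..K}. if X < real (smooth_part Q k) then 1 / real k else 0))"
    by (simp add: sum.distrib sum_distrib_left harm_def divide_inverse)
  also have "\<dots> \<le> 36 * \<epsilon> * ln T + 4 * ((2 * \<epsilon> * ln T + 1) + exp (- \<epsilon> * ln T / ln P) * exp 24 * ln T)"
    using harm_K_le eps_pos sum_inverse_gt_Y_le sum_inverse_large_smooth_part_le
    by (intro add_mono mult_left_mono) auto
  also have "\<dots> \<le> 48 * \<epsilon> * ln T + 4 * exp 24 * ln T * exp (- \<epsilon> * ln T / ln P)"
    using one_lt_eps_ln_T by (simp add: algebra_simps)
  finally show ?thesis .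
qed

lemma K_sq_le: "128 * (real K)\<^sup>2 \<le> 43 * T * (\<epsilon> * ln T)"
proof -
  have "T / pi \<le> T / 3" using T_pos pi_gt3 by (intro divide_left_mono) auto
  then have "128 * (real K)\<^sup>2 \<le> 128 * (T / 3)" using K_le(3) by linarith
  also have "\<dots> \<le> 43 * T * (\<epsilon> * ln T)"
    using one_lt_eps_ln_T T_pos mult_left_mono[of 1 "\<epsilon> * ln T" "43 * T"] by simp
  finally show ?thesis .
qed

theorem integral_F_bound:
  "integral {T..2 * T} (\<lambda>t. (cmod (F t))\<^sup>2) \<le> (91 + 4 * exp 24) * T * ln T * (exp (- \<epsilon> * ln T / ln P) + \<epsilon>)"
proof -
  define E where "E = exp (- \<epsilon> * ln T / ln P)"
  have "T * (\<Sum>k\<in>{1..K}. diag k) \<le> T * (48 * \<epsilon> * ln T + 4 * exp 24 * ln T * E)"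
    using sum_diag_le T_pos by (intro mult_left_mono) (auto simp: E_def)
  then have "integral {T..2 * T} (\<lambda>t. (cmod (F t))\<^sup>2) \<le> T * (48 * \<epsilon> * ln T + 4 * exp 24 * ln T * E) + 43 * T * (\<epsilon> * ln T)"
    using integral_F_le K_sq_le by linarith
  also have "\<dots> \<le> (91 + 4 * exp 24) * T * ln T * (E + \<epsilon>)"
  proof -
    have "0 \<le> 91 * (T * ln T * E) + 4 * exp 24 * (T * ln T * \<epsilon>)"
      using T_pos ln_T_pos eps_pos by (intro add_nonneg_nonneg mult_nonneg_nonneg) (auto simp: E_def)
    moreover have "(91 + 4 * exp 24) * T * ln T * (E + \<epsilon>) = T * (48 * \<epsilon> * ln T + 4 * exp 24 * ln T * E)
        + 43 * T * (\<epsilon> * ln T) + (91 * (T * ln T * E) + 4 * exp 24 * (T * ln T * \<epsilon>))"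
      by (simp add: algebra_simps)
    ultimately show ?thesis by linarith
  qed
  finally show ?thesis by (simp add: E_def)
qed

theorem approximation_error_le:
  "integral {T..2*T} (\<lambda>t. (cmod (
        (\<Sum>n\<in>{1..nat \<lfloor>sqrt (t / (2*pi))\<rfloor>}. 1 / (of_nat n powr Complex \<sigma> t))
      - (\<Sum>m\<in>{m. smooth P m \<and> real m \<le> T powr \<epsilon>}. 1 / (of_nat m powr Complex (1/2) t))
        * (\<Sum>n\<in>{n. rough P n \<and> real n \<le> T powr (1/2 - 2*\<epsilon>)}. 1 / (of_nat n powr Complex \<sigma> t))))\<^sup>2)
    \<le> (91 + 4 * exp 24) * T * ln T * (exp (- \<epsilon> * ln T / ln P) + \<epsilon>)"
  using integral_F_bound unfolding F_def A_def B_def X_def Y_def .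

end

theorem lemma3:
  shows "\<exists>C>0. \<exists>T0 P0. \<forall>T P \<epsilon> \<sigma> :: real.
    T \<ge> T0 \<and> P \<ge> P0 \<and> P \<le> sqrt T \<and>
    1 / ln T < \<epsilon> \<and> \<epsilon> < 1/10 \<and>
    1/2 - 1 / ln T \<le> \<sigma> \<and> \<sigma> \<le> 1/2 + 1 / ln T \<longrightarrow>
    integral {T..2*T} (\<lambda>t. (cmod (
        (\<Sum>n\<in>{1..nat \<lfloor>sqrt (t / (2*pi))\<rfloor>}. 1 / (of_nat n powr Complex \<sigma> t))
      - (\<Sum>m\<in>{m. smooth P m \<and> real m \<le> T powr \<epsilon>}. 1 / (of_nat m powr Complex (1/2) t))
        * (\<Sum>n\<in>{n. rough P n \<and> real n \<le> T powr (1/2 - 2*\<epsilon>)}. 1 / (of_nat n powr Complex \<sigma> t))))\<^sup>2)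
    \<le> C * T * ln T * (exp (- \<epsilon> * ln T / ln P) + \<epsilon>)"
proof -
  have "(0 :: real) < 91 + 4 * exp 24" by (simp add: add_pos_pos)
  moreover note smooth_rough_approximation.approximation_error_le[unfolded smooth_rough_approximation_def]
  ultimately show ?thesis by blast
qed

end
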